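(* Let $p\in[1,\infty)$, $w$ a weight sequence, and $A\subset L_{p,w}$ such that $\forall\varepsilon>0\ \exists N\in\mathbb{N}\ \forall a\in A\ \forall i\ge N:\ T_i(a)<\varepsilon$. Then the same holds for $A-A=\{a-b:a,b\in A\}$, i.e. $\forall\varepsilon>0\ \exists N\in\mathbb{N}\ \forall a,b\in A\ \forall i\ge N:\ T_i(a-b)<\varepsilon$.
   Context: A weight sequence is a sequence $w=(w_i)$ of positive reals with $w_1=1\ge w_2\ge\dots$, $w_i\to0$, and $\sum_i w_i=+\infty$. For a real sequence $a$, $\|a\|_{p,w}=\sup_{\sigma}\big(\sum_{i=1}^\infty |a_{\sigma_i}|^p w_i\big)^{1/p}$ over all permutations $\sigma$ of $\mathbb{N}$; $L_{p,w}$ is the set of real sequences with finite norm. $T_i(a)=\|(a_{i+1},a_{i+2},\dots)\|_{p,w}^p$ (the $p$-th power of the norm of the $i$-th tail). *)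

theory Defs
  imports "HOL-Analysis.Analysis"
begin

(* Sequences are 0-indexed: a 0 is a_1, w 0 is w_1. *)

definition weight_seq :: "(nat \<Rightarrow> real) \<Rightarrow> bool" where
  "weight_seq w \<longleftrightarrow> (\<forall>i. w i > 0) \<and> w 0 = 1 \<and> decseq w \<and> w \<longlonglongrightarrow> 0
     \<and> \<not> summable w"

definition lorentz_pow :: "real \<Rightarrow> (nat \<Rightarrow> real) \<Rightarrow> (nat \<Rightarrow> real) \<Rightarrow> ennreal" where
  "lorentz_pow p w a = (SUP \<sigma>\<in>{\<sigma>. bij \<sigma>}. (\<Sum>i. ennreal (\<bar>a (\<sigma> i)\<bar> powr p * w i)))"

definition L_pw :: "real \<Rightarrow> (nat \<Rightarrow> real) \<Rightarrow> (nat \<Rightarrow> real) set" where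
  "L_pw p w = {a. lorentz_pow p w a < top}"

(* the norm ||a||_{p,w} (meaningful for a in L_pw) *)
definition lorentz_norm :: "real \<Rightarrow> (nat \<Rightarrow> real) \<Rightarrow> (nat \<Rightarrow> real) \<Rightarrow> real" where
  "lorentz_norm p w a = enn2real (lorentz_pow p w a) powr (1 / p)"

(* T_i(a) = || (a_{i+1}, a_{i+2}, ...) ||^p ; in 0-indexing the i-th tail is k \<mapsto> a (k + i) *)
definition tail_T :: "real \<Rightarrow> (nat \<Rightarrow> real) \<Rightarrow> nat \<Rightarrow> (nat \<Rightarrow> real) \<Rightarrow> real" where
  "tail_T p w i a = lorentz_norm p w (\<lambda>k. a (k + i)) powr p"

end

theory Submission
  imports Defs "HOL-Combinatorics.Permutations"
begin

text \<open>The pointwise inequality \<open>|x - y|^p \<le> 2^p (|x|^p + |y|^p)\<close>, summed against the weights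
  along any rearrangement, gives \<open>T\<^sub>i(a - b) \<le> 2^p (T\<^sub>i(a) + T\<^sub>i(b))\<close> for \<open>a, b \<in> L\<^sub>p\<^sub>,\<^sub>w\<close>;
  so choosing \<open>N\<close> for \<open>\<epsilon> / 2^(p+1)\<close> in the hypothesis on \<open>A\<close> works for \<open>A - A\<close>.
  The one point needing care is that tails of elements of \<open>L\<^sub>p\<^sub>,\<^sub>w\<close> lie again in \<open>L\<^sub>p\<^sub>,\<^sub>w\<close>
  (otherwise \<open>T\<^sub>i\<close> is the junk value \<open>0\<close>): on every finite initial segment, a rearrangement
  of a tail agrees with a rearrangement of the whole sequence.\<close>

lemma inj_on_extends_to_bij:
  fixes g :: "'a \<Rightarrow> 'a"
  assumes "finite S" and "inj_on g S"
  obtains \<pi> where "bij \<pi>" and "\<And>x. x \<in> S \<Longrightarrow> \<pi> x = g x"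
proof -
  define M where "M = S \<union> g ` S"
  have "card (M - S) = card (M - g ` S)"
    using assms by (simp add: M_def card_Diff_subset card_image)
  then obtain h where h: "bij_betw h (M - S) (M - g ` S)"
    using assms(1) by (metis M_def finite_Diff finite_Un finite_imageI finite_same_card_bij)
  define \<pi> where "\<pi> x = (if x \<in> S then g x else if x \<in> M then h x else x)" for x
  have "bij_betw \<pi> S (g ` S)"
    using inj_on_imp_bij_betw[OF assms(2)] by (rule bij_betw_cong[THEN iffD1, rotated]) (simp add: \<pi>_def)
  moreover have "bij_betw \<pi> (M - S) (M - g ` S)"
    using h by (rule bij_betw_cong[THEN iffD1, rotated]) (simp add: \<pi>_def)
  ultimately have "bij_betw \<pi> (S \<union> (M - S)) (g ` S \<union> (M - g ` S))"
    by (rule bij_betw_combine) blast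
  then have "bij_betw \<pi> M M"
    by (simp add: M_def Un_absorb1 Un_commute sup_left_commute)
  then have "\<pi> permutes M"
    by (rule bij_imp_permutes) (simp add: \<pi>_def M_def)
  then show thesis
    using that[OF permutes_bij] by (simp add: \<pi>_def)
qed

lemma lorentz_pow_upper:
  assumes "bij \<sigma>"
  shows "(\<Sum>i. ennreal (\<bar>a (\<sigma> i)\<bar> powr p * w i)) \<le> lorentz_pow p w a"
  unfolding lorentz_pow_def using assms by (intro SUP_upper) simp

lemma lorentz_pow_comp_inj_le:
  assumes "inj f"
  shows "lorentz_pow p w (a \<circ> f) \<le> lorentz_pow p w a"
  unfolding lorentz_pow_def[of p w "a \<circ> f"]
proof (rule SUP_least)
  fix \<sigma> :: "nat \<Rightarrow> nat" assume "\<sigma> \<in> {\<sigma>. bij \<sigma>}"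
  then have "inj (f \<circ> \<sigma>)"
    using assms by (simp add: bij_is_inj inj_compose)
  have "(\<Sum>i<n. ennreal (\<bar>a (f (\<sigma> i))\<bar> powr p * w i)) \<le> lorentz_pow p w a" for n
  proof -
    obtain \<pi> where \<pi>: "bij \<pi>" "\<And>i. i \<in> {..<n} \<Longrightarrow> \<pi> i = f (\<sigma> i)"
      using inj_on_extends_to_bij[of "{..<n}" "f \<circ> \<sigma>"] \<open>inj (f \<circ> \<sigma>)\<close>
      by (metis comp_apply finite_lessThan inj_on_subset subset_UNIV)
    have "(\<Sum>i<n. ennreal (\<bar>a (f (\<sigma> i))\<bar> powr p * w i)) = (\<Sum>i<n. ennreal (\<bar>a (\<pi> i)\<bar> powr p * w i))"
      using \<pi>(2) by simp
    also have "\<dots> \<le> (\<Sum>i. ennreal (\<bar>a (\<pi> i)\<bar> powr p * w i))"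
      by (rule sum_le_suminf) auto
    also have "\<dots> \<le> lorentz_pow p w a"
      using \<pi>(1) by (rule lorentz_pow_upper)
    finally show ?thesis .
  qed
  then show "(\<Sum>i. ennreal (\<bar>(a \<circ> f) (\<sigma> i)\<bar> powr p * w i)) \<le> lorentz_pow p w a"
    unfolding suminf_eq_SUP by (auto intro: SUP_least)
qed

lemma shift_in_L_pw:
  assumes "a \<in> L_pw p w"
  shows "(\<lambda>k. a (k + i)) \<in> L_pw p w"
proof -
  have "lorentz_pow p w (a \<circ> (\<lambda>k. k + i)) \<le> lorentz_pow p w a"
    by (rule lorentz_pow_comp_inj_le) (simp add: inj_def)
  then show ?thesis
    using assms by (auto simp: L_pw_def comp_def)
qed

lemma abs_diff_powr_le:
  fixes x y p :: real
  assumes "0 \<le> p"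
  shows "\<bar>x - y\<bar> powr p \<le> 2 powr p * (\<bar>x\<bar> powr p + \<bar>y\<bar> powr p)"
proof -
  have "\<bar>x - y\<bar> powr p \<le> (2 * max \<bar>x\<bar> \<bar>y\<bar>) powr p"
    using assms by (intro powr_mono2) auto
  also have "\<dots> = 2 powr p * max \<bar>x\<bar> \<bar>y\<bar> powr p"
    by (simp add: powr_mult)
  also have "\<dots> \<le> 2 powr p * (\<bar>x\<bar> powr p + \<bar>y\<bar> powr p)"
    by (intro mult_left_mono) (auto simp: max_def)
  finally show ?thesis .
qed

lemma lorentz_pow_diff_le:
  assumes "0 \<le> p" and w_nonneg: "\<And>k. 0 \<le> w k"
  shows "lorentz_pow p w (\<lambda>k. a k - b k)
    \<le> ennreal (2 powr p) * (lorentz_pow p w a + lorentz_pow p w b)"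
  unfolding lorentz_pow_def[of p w "\<lambda>k. a k - b k"]
proof (rule SUP_least)
  fix \<sigma> :: "nat \<Rightarrow> nat" assume "\<sigma> \<in> {\<sigma>. bij \<sigma>}"
  let ?A = "\<lambda>k. ennreal (\<bar>a (\<sigma> k)\<bar> powr p * w k)"
  let ?B = "\<lambda>k. ennreal (\<bar>b (\<sigma> k)\<bar> powr p * w k)"
  have "(\<Sum>k. ennreal (\<bar>a (\<sigma> k) - b (\<sigma> k)\<bar> powr p * w k)) \<le> (\<Sum>k. ennreal (2 powr p) * (?A k + ?B k))"
  proof (rule suminf_le)
    fix k
    have "\<bar>a (\<sigma> k) - b (\<sigma> k)\<bar> powr p * w k
        \<le> 2 powr p * (\<bar>a (\<sigma> k)\<bar> powr p * w k + \<bar>b (\<sigma> k)\<bar> powr p * w k)"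
      using mult_right_mono[OF abs_diff_powr_le[OF assms(1), of "a (\<sigma> k)" "b (\<sigma> k)"] w_nonneg]
      by (simp add: algebra_simps)
    then show "ennreal (\<bar>a (\<sigma> k) - b (\<sigma> k)\<bar> powr p * w k) \<le> ennreal (2 powr p) * (?A k + ?B k)"
      using w_nonneg by (simp add: ennreal_mult[symmetric] ennreal_plus[symmetric] del: ennreal_plus)
  qed auto
  also have "\<dots> = ennreal (2 powr p) * ((\<Sum>k. ?A k) + (\<Sum>k. ?B k))"
    by (simp add: suminf_add)
  also have "\<dots> \<le> ennreal (2 powr p) * (lorentz_pow p w a + lorentz_pow p w b)"
    using \<open>\<sigma> \<in> {\<sigma>. bij \<sigma>}\<close> by (intro mult_left_mono add_mono lorentz_pow_upper) auto
  finally show "(\<Sum>k. ennreal (\<bar>a (\<sigma> k) - b (\<sigma> k)\<bar> powr p * w k))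
    \<le> ennreal (2 powr p) * (lorentz_pow p w a + lorentz_pow p w b)" .
qed

lemma tail_T_eq_enn2real:
  assumes "0 < p"
  shows "tail_T p w i a = enn2real (lorentz_pow p w (\<lambda>k. a (k + i)))"
  using assms unfolding tail_T_def lorentz_norm_def by (simp add: powr_powr)

lemma tail_T_diff_le:
  assumes "0 < p" and "\<And>k. 0 \<le> w k" and "a \<in> L_pw p w" and "b \<in> L_pw p w"
  shows "tail_T p w i (\<lambda>k. a k - b k) \<le> 2 powr p * (tail_T p w i a + tail_T p w i b)"
proof -
  let ?a = "\<lambda>k. a (k + i)" and ?b = "\<lambda>k. b (k + i)"
  have fin: "lorentz_pow p w ?a < top" "lorentz_pow p w ?b < top"
    using shift_in_L_pw[OF assms(3)] shift_in_L_pw[OF assms(4)] by (auto simp: L_pw_def)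
  have "enn2real (lorentz_pow p w (\<lambda>k. ?a k - ?b k))
      \<le> enn2real (ennreal (2 powr p) * (lorentz_pow p w ?a + lorentz_pow p w ?b))"
    using lorentz_pow_diff_le[of p w ?a ?b] assms(1,2) fin
    by (intro enn2real_mono) (auto simp: ennreal_mult_less_top)
  also have "\<dots> = 2 powr p * (enn2real (lorentz_pow p w ?a) + enn2real (lorentz_pow p w ?b))"
    using fin by (simp add: enn2real_mult enn2real_plus)
  finally show ?thesis
    using assms(1) by (simp add: tail_T_eq_enn2real)
qed

theorem mainTheorem11:
  fixes p :: real and w :: "nat \<Rightarrow> real" and A :: "(nat \<Rightarrow> real) set"
  assumes "1 \<le> p" and "weight_seq w" and "A \<subseteq> L_pw p w"
    and "\<forall>\<epsilon>>0. \<exists>N. \<forall>a\<in>A. \<forall>i\<ge>N. tail_T p w i a < \<epsilon>"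
  shows "\<forall>\<epsilon>>0. \<exists>N. \<forall>a\<in>A. \<forall>b\<in>A. \<forall>i\<ge>N. tail_T p w i (\<lambda>k. a k - b k) < \<epsilon>"
proof (intro allI impI)
  fix \<epsilon> :: real assume "\<epsilon> > 0"
  define C where "C = 2 powr p"
  have "C > 0" by (simp add: C_def)
  have w_nonneg: "0 \<le> w k" for k
    using assms(2) by (simp add: weight_seq_def less_imp_le)
  obtain N where N: "\<forall>a\<in>A. \<forall>i\<ge>N. tail_T p w i a < \<epsilon> / (2 * C)"
    using assms(4) \<open>\<epsilon> > 0\<close> \<open>C > 0\<close> by (meson divide_pos_pos mult_pos_pos zero_less_numeral)
  have "tail_T p w i (\<lambda>k. a k - b k) < \<epsilon>" if "a \<in> A" "b \<in> A" "N \<le> i" for a b i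
  proof -
    have "tail_T p w i (\<lambda>k. a k - b k) \<le> C * (tail_T p w i a + tail_T p w i b)"
      unfolding C_def using assms(1,3) that w_nonneg by (intro tail_T_diff_le) auto
    also have "\<dots> < C * (\<epsilon> / (2 * C) + \<epsilon> / (2 * C))"
      using N that \<open>C > 0\<close> by (intro mult_strict_left_mono add_strict_mono) auto
    also have "\<dots> = \<epsilon>"
      using \<open>C > 0\<close> by (simp add: field_simps)
    finally show ?thesis .
  qed
  then show "\<exists>N. \<forall>a\<in>A. \<forall>b\<in>A. \<forall>i\<ge>N. tail_T p w i (\<lambda>k. a k - b k) < \<epsilon>"
    by blast
qed

end
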